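(* Let $X$, $(Y,d_Y)$, $(Z,d_Z)$ be Polish (metric) spaces, $M$ a set, and $P: X \rightsquigarrow Y$, $Q: Y \rightsquigarrow Z$ tight Feller kernels. For $\mu \in \mathcal{P}(Y)$ write $\mu Q = \int Q(y,\cdot)\,d\mu(y)$, and assume $W_1(\mu Q, \nu Q) \le L\, W_1(\mu,\nu)$ for all $\mu,\nu \in \mathcal{P}(Y)$. Then for any $\delta, \epsilon \ge 0$ and any relation $R \subseteq X \times M$, $$Q_{!W}^\epsilon(P_{!W}^\delta R) \subseteq (Q \circ P)_{!W}^{L\delta+\epsilon} R.$$
   Context: $W_1(\mu,\nu) = \inf_{\pi \in \Pi(\mu,\nu)} \int d(y,y')\,d\pi(y,y')$ (possibly $+\infty$). Composite kernel: $(Q \circ P)(x) = P(x)Q$, i.e. $(Q\circ P)(x,C) = \int Q(y,C)\,P(x,dy)$. Wasserstein pushforward of a relation: $P_{!W}^\delta R = \{(\nu,m) \in \mathcal{P}(Y) \times M : \exists x,\ (x,m) \in R,\ W_1(P(x),\nu) \le \delta\}$. For a set $\mathcal{M} \subseteq \mathcal{P}(Y) \times M$, $Q_{!W}^\epsilon \mathcal{M} = \{(\gamma,m) \in \mathcal{P}(Z) \times M : \exists \nu,\ (\nu,m) \in \mathcal{M},\ W_1(\nu Q, \gamma) \le \epsilon\}$; for $R \subseteq X \times M$, $(Q\circ P)_{!W}^\eta R = \{(\gamma,m) : \exists x,\ (x,m) \in R,\ W_1((Q\circ P)(x), \gamma) \le \eta\}$. *)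

theory Defs
  imports "HOL-Probability.Probability"
begin

definition Prob :: "'a::topological_space measure set" where
  "Prob = {\<mu>. prob_space \<mu> \<and> sets \<mu> = sets borel}"

definition couplings :: "'a::topological_space measure \<Rightarrow> 'b::topological_space measure \<Rightarrow> ('a \<times> 'b) measure set" where
  "couplings \<mu> \<nu> = {\<pi>. prob_space \<pi> \<and> sets \<pi> = sets borel \<and>
      distr \<pi> borel fst = \<mu> \<and> distr \<pi> borel snd = \<nu>}"

definition W1 :: "'a::metric_space measure \<Rightarrow> 'a measure \<Rightarrow> ennreal" where
  "W1 \<mu> \<nu> = (INF \<pi>\<in>couplings \<mu> \<nu>. \<integral>\<^sup>+ p. ennreal (dist (fst p) (snd p)) \<partial>\<pi>)"

definition markov_kernel :: "('a::topological_space \<Rightarrow> 'b::topological_space measure) \<Rightarrow> bool" where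
  "markov_kernel P \<longleftrightarrow> P \<in> borel \<rightarrow>\<^sub>M prob_algebra borel"

definition feller :: "('a::topological_space \<Rightarrow> 'b::topological_space measure) \<Rightarrow> bool" where
  "feller P \<longleftrightarrow> (\<forall>f :: 'b \<Rightarrow> real. continuous_on UNIV f \<and> bounded (range f) \<longrightarrow>
      continuous_on UNIV (\<lambda>x. \<integral>y. f y \<partial>P x))"

definition tight_kernel :: "('a \<Rightarrow> 'b::topological_space measure) \<Rightarrow> bool" where
  "tight_kernel P \<longleftrightarrow> (\<forall>x. \<forall>e>0. \<exists>K. compact K \<and> measure (P x) (UNIV - K) \<le> e)"

definition comp_kernel :: "('b \<Rightarrow> 'c measure) \<Rightarrow> ('a \<Rightarrow> 'b measure) \<Rightarrow> 'a \<Rightarrow> 'c measure" where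
  "comp_kernel Q P = (\<lambda>x. Giry_Monad.bind (P x) Q)"

definition kernel_push_W :: "('a \<Rightarrow> 'b::metric_space measure) \<Rightarrow> real \<Rightarrow> ('a \<times> 'm) set \<Rightarrow> ('b measure \<times> 'm) set" where
  "kernel_push_W P \<delta> R = {(\<nu>, m). \<nu> \<in> Prob \<and> (\<exists>x. (x, m) \<in> R \<and> W1 (P x) \<nu> \<le> ennreal \<delta>)}"

definition meas_push_W :: "('b \<Rightarrow> 'c::metric_space measure) \<Rightarrow> real \<Rightarrow> ('b measure \<times> 'm) set \<Rightarrow> ('c measure \<times> 'm) set" where
  "meas_push_W Q \<epsilon> \<M> = {(\<gamma>, m). \<gamma> \<in> Prob \<and> (\<exists>\<nu>. (\<nu>, m) \<in> \<M> \<and> W1 (Giry_Monad.bind \<nu> Q) \<gamma> \<le> ennreal \<epsilon>)}"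

end

theory Submission
  imports Defs
begin

(* If W1(P x, \<nu>) \<le> \<delta> and W1(\<nu> Q, \<gamma>) \<le> \<epsilon>, then
   W1((Q \<circ> P) x, \<gamma>) \<le> W1(P(x) Q, \<nu> Q) + W1(\<nu> Q, \<gamma>) \<le> L \<delta> + \<epsilon>,
   so everything rests on the triangle inequality for W1.  Without disintegration of measures, couplings \<pi>1 of (\<mu>, \<nu>)
   and \<pi>2 of (\<nu>, \<gamma>) are glued only approximately: cut the space into countably many
   Borel cells of diameter at most \<eta> and make the two couplings conditionally independent
   given the cell of the middle coordinate, i.e. take the density
   [same cell] / \<nu>(cell) with respect to \<pi>1 \<otimes> \<pi>2.  The resulting coupling of \<mu> and \<gamma>
   costs at most cost \<pi>1 + \<eta> + cost \<pi>2. *)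

lemma small_borel_partitionE:
  fixes \<eta> :: real
  assumes "\<eta> > 0"
  obtains k :: "'a::{metric_space,second_countable_topology} \<Rightarrow> nat"
  where "k \<in> borel \<rightarrow>\<^sub>M count_space UNIV" and "\<And>a b. k a = k b \<Longrightarrow> dist a b \<le> \<eta>"
proof -
  obtain D :: "'a set" where "countable D"
    and dense: "\<And>X. open X \<Longrightarrow> X \<noteq> {} \<Longrightarrow> \<exists>d\<in>D. d \<in> X"
    by (erule countable_dense_setE)
  define s where "s = from_nat_into D"
  have near: "\<exists>n. dist (s n) b < \<eta>/2" for b
  proof -
    obtain d where "d \<in> D" "d \<in> ball b (\<eta>/2)"
      using dense[of "ball b (\<eta>/2)"] assms by auto
    moreover have "s (to_nat_on D d) = d"
      using \<open>countable D\<close> \<open>d \<in> D\<close> by (simp add: s_def)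
    ultimately show ?thesis by (metis dist_commute mem_ball)
  qed
  define k where "k b = (LEAST n. dist (s n) b < \<eta>/2)" for b
  have "k \<in> borel \<rightarrow>\<^sub>M count_space UNIV"
    unfolding k_def by measurable
  moreover have "dist a b \<le> \<eta>" if "k a = k b" for a b
  proof -
    have close: "dist (s (k c)) c < \<eta>/2" for c
      unfolding k_def by (rule LeastI_ex[OF near])
    have "dist a b \<le> dist (s (k a)) a + dist (s (k a)) b"
      by (rule dist_triangle3)
    also have "\<dots> < \<eta>"
      using close[of a] close[of b] that by simp
    finally show ?thesis by simp
  qed
  ultimately show ?thesis using that by blast
qed

lemma sets_borel_pair[measurable_cong]:
  "sets (borel :: ('a::second_countable_topology \<times> 'b::second_countable_topology) measure)
    = sets (borel \<Otimes>\<^sub>M borel)"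
  by (simp only: borel_prod)

lemma couplingD:
  fixes \<pi> :: "('a::second_countable_topology \<times> 'b::second_countable_topology) measure"
  assumes "\<pi> \<in> couplings \<mu> \<nu>"
  shows "prob_space \<pi>" and "sets \<pi> = sets (borel \<Otimes>\<^sub>M borel)"
    and "distr \<pi> borel fst = \<mu>" and "distr \<pi> borel snd = \<nu>"
  using assms unfolding couplings_def borel_prod by auto

locale gluing =
  fixes \<mu> :: "'a::second_countable_topology measure"
    and \<nu> :: "'b::second_countable_topology measure"
    and \<gamma> :: "'c::second_countable_topology measure"
    and \<pi>1 :: "('a \<times> 'b) measure" and \<pi>2 :: "('b \<times> 'c) measure"
    and k :: "'b \<Rightarrow> nat"
  assumes coupling1: "\<pi>1 \<in> couplings \<mu> \<nu>" and coupling2: "\<pi>2 \<in> couplings \<nu> \<gamma>"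
    and cell_index_measurable[measurable]: "k \<in> borel \<rightarrow>\<^sub>M count_space UNIV"
begin

sublocale \<pi>1: prob_space \<pi>1 using couplingD(1)[OF coupling1] .
sublocale \<pi>2: prob_space \<pi>2 using couplingD(1)[OF coupling2] .
sublocale \<pi>12: pair_prob_space \<pi>1 \<pi>2 ..

lemma sets_\<pi>1[measurable_cong]: "sets \<pi>1 = sets (borel \<Otimes>\<^sub>M borel)"
  using couplingD(2)[OF coupling1] .

lemma sets_\<pi>2[measurable_cong]: "sets \<pi>2 = sets (borel \<Otimes>\<^sub>M borel)"
  using couplingD(2)[OF coupling2] .

lemma space_\<pi>1[simp]: "space \<pi>1 = UNIV"
  using sets_eq_imp_space_eq[OF sets_\<pi>1] by (simp add: space_pair_measure)

lemma space_\<pi>2[simp]: "space \<pi>2 = UNIV"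
  using sets_eq_imp_space_eq[OF sets_\<pi>2] by (simp add: space_pair_measure)

lemma sets_cell: "k -` {n} \<in> sets borel"
  using measurable_sets[OF cell_index_measurable, of "{n}"] by simp

(* Infinite on \<nu>-null cells, which \<pi>1 and \<pi>2 do not see. *)
definition cell_weight :: "nat \<Rightarrow> ennreal" where
  "cell_weight n = inverse (emeasure \<nu> (k -` {n}))"

definition glue_density :: "('a \<times> 'b) \<times> ('b \<times> 'c) \<Rightarrow> ennreal" where
  "glue_density z = (if k (snd (fst z)) = k (fst (snd z)) then cell_weight (k (snd (fst z))) else 0)"

lemma glue_density_measurable[measurable]: "glue_density \<in> borel_measurable (\<pi>1 \<Otimes>\<^sub>M \<pi>2)"
proof -
  have "Measurable.pred (\<pi>1 \<Otimes>\<^sub>M \<pi>2) (\<lambda>z. \<exists>n. k (snd (fst z)) = n \<and> n = k (fst (snd z)))"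
    by measurable
  then have [measurable]: "Measurable.pred (\<pi>1 \<Otimes>\<^sub>M \<pi>2) (\<lambda>z. k (snd (fst z)) = k (fst (snd z)))"
    by simp
  show ?thesis
    unfolding glue_density_def by measurable
qed

lemma emeasure_cell_\<pi>1: "emeasure \<pi>1 {p. k (snd p) = n} = emeasure \<nu> (k -` {n})"
proof -
  have "emeasure \<nu> (k -` {n}) = emeasure (distr \<pi>1 borel snd) (k -` {n})"
    using couplingD(4)[OF coupling1] by simp
  also have "\<dots> = emeasure \<pi>1 {p. k (snd p) = n}"
    by (subst emeasure_distr) (simp_all add: vimage_def)
  finally show ?thesis ..
qed

lemma emeasure_cell_\<pi>2: "emeasure \<pi>2 {q. k (fst q) = n} = emeasure \<nu> (k -` {n})"
proof -
  have "emeasure \<nu> (k -` {n}) = emeasure (distr \<pi>2 borel fst) (k -` {n})"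
    using couplingD(3)[OF coupling2] by simp
  also have "\<dots> = emeasure \<pi>2 {q. k (fst q) = n}"
    by (subst emeasure_distr) (simp_all add: vimage_def)
  finally show ?thesis ..
qed

lemma AE_cell_weight:
  "AE b in \<nu>. cell_weight (k b) * emeasure \<nu> (k -` {k b}) = 1"
proof -
  have "prob_space (distr \<pi>1 borel snd)"
    by (rule \<pi>1.prob_space_distr) simp
  then interpret \<nu>: prob_space \<nu>
    by (simp only: couplingD(4)[OF coupling1])
  have sets_\<nu>: "sets \<nu> = sets borel"
    using couplingD(4)[OF coupling1] by auto
  have "AE b in \<nu>. k b = n \<longrightarrow> cell_weight n * emeasure \<nu> (k -` {n}) = 1" for n
  proof (cases "emeasure \<nu> (k -` {n}) = 0")
    case True
    then have "k -` {n} \<in> null_sets \<nu>"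
      using sets_\<nu> sets_cell by (simp add: null_sets_def)
    from AE_not_in[OF this] show ?thesis by eventually_elim simp
  next
    case False
    then have "emeasure \<nu> (k -` {n}) / emeasure \<nu> (k -` {n}) = 1"
      by (intro ennreal_divide_self) (simp_all add: less_top[symmetric])
    then show ?thesis
      by (simp add: cell_weight_def divide_ennreal_def mult.commute)
  qed
  then have "AE b in \<nu>. \<forall>n. k b = n \<longrightarrow> cell_weight n * emeasure \<nu> (k -` {n}) = 1"
    by (subst AE_all_countable) simp
  then show ?thesis by eventually_elim simp
qed

lemma AE_cell_weight_\<pi>1: "AE p in \<pi>1. cell_weight (k (snd p)) * emeasure \<nu> (k -` {k (snd p)}) = 1"
proof -
  have "AE b in distr \<pi>1 borel snd. cell_weight (k b) * emeasure \<nu> (k -` {k b}) = 1"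
    unfolding couplingD(4)[OF coupling1] by (rule AE_cell_weight)
  then show ?thesis
    by (subst (asm) AE_distr_iff) simp_all
qed

lemma AE_cell_weight_\<pi>2: "AE q in \<pi>2. cell_weight (k (fst q)) * emeasure \<nu> (k -` {k (fst q)}) = 1"
proof -
  have "AE b in distr \<pi>2 borel fst. cell_weight (k b) * emeasure \<nu> (k -` {k b}) = 1"
    unfolding couplingD(3)[OF coupling2] by (rule AE_cell_weight)
  then show ?thesis
    by (subst (asm) AE_distr_iff) simp_all
qed

lemma nn_integral_glue_density_fst:
  assumes [measurable]: "F \<in> borel_measurable (borel \<Otimes>\<^sub>M borel)"
  shows "(\<integral>\<^sup>+z. F (fst z) * glue_density z \<partial>(\<pi>1 \<Otimes>\<^sub>M \<pi>2)) = (\<integral>\<^sup>+p. F p \<partial>\<pi>1)"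
proof -
  have inner: "(\<integral>\<^sup>+q. F p * glue_density (p, q) \<partial>\<pi>2)
      = F p * (cell_weight (k (snd p)) * emeasure \<nu> (k -` {k (snd p)}))" for p
  proof -
    have "{q \<in> space \<pi>2. k (fst q) = k (snd p)} \<in> sets \<pi>2" by measurable
    then have cell: "{q. k (fst q) = k (snd p)} \<in> sets \<pi>2" by simp
    have "(\<integral>\<^sup>+q. F p * glue_density (p, q) \<partial>\<pi>2)
        = (\<integral>\<^sup>+q. (F p * cell_weight (k (snd p))) * indicator {q. k (fst q) = k (snd p)} q \<partial>\<pi>2)"
      by (intro nn_integral_cong) (simp add: glue_density_def split: split_indicator)
    also have "\<dots> = F p * cell_weight (k (snd p)) * emeasure \<pi>2 {q. k (fst q) = k (snd p)}"
      using cell by (rule nn_integral_cmult_indicator)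
    finally show ?thesis by (simp add: emeasure_cell_\<pi>2 mult.assoc)
  qed
  have "(\<integral>\<^sup>+z. F (fst z) * glue_density z \<partial>(\<pi>1 \<Otimes>\<^sub>M \<pi>2))
      = (\<integral>\<^sup>+p. \<integral>\<^sup>+q. F p * glue_density (p, q) \<partial>\<pi>2 \<partial>\<pi>1)"
    by (subst \<pi>2.nn_integral_fst[symmetric]) simp_all
  also have "\<dots> = (\<integral>\<^sup>+p. F p \<partial>\<pi>1)"
    unfolding inner by (rule nn_integral_cong_AE) (use AE_cell_weight_\<pi>1 in eventually_elim, simp)
  finally show ?thesis .
qed

lemma nn_integral_glue_density_snd:
  assumes [measurable]: "G \<in> borel_measurable (borel \<Otimes>\<^sub>M borel)"
  shows "(\<integral>\<^sup>+z. G (snd z) * glue_density z \<partial>(\<pi>1 \<Otimes>\<^sub>M \<pi>2)) = (\<integral>\<^sup>+q. G q \<partial>\<pi>2)"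
proof -
  have inner: "(\<integral>\<^sup>+p. G q * glue_density (p, q) \<partial>\<pi>1)
      = G q * (cell_weight (k (fst q)) * emeasure \<nu> (k -` {k (fst q)}))" for q
  proof -
    have "{p \<in> space \<pi>1. k (snd p) = k (fst q)} \<in> sets \<pi>1" by measurable
    then have cell: "{p. k (snd p) = k (fst q)} \<in> sets \<pi>1" by simp
    have "(\<integral>\<^sup>+p. G q * glue_density (p, q) \<partial>\<pi>1)
        = (\<integral>\<^sup>+p. (G q * cell_weight (k (fst q))) * indicator {p. k (snd p) = k (fst q)} p \<partial>\<pi>1)"
      by (intro nn_integral_cong) (simp add: glue_density_def split: split_indicator)
    also have "\<dots> = G q * cell_weight (k (fst q)) * emeasure \<pi>1 {p. k (snd p) = k (fst q)}"
      using cell by (rule nn_integral_cmult_indicator)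
    finally show ?thesis by (simp add: emeasure_cell_\<pi>1 mult.assoc)
  qed
  have "(\<integral>\<^sup>+z. G (snd z) * glue_density z \<partial>(\<pi>1 \<Otimes>\<^sub>M \<pi>2))
      = (\<integral>\<^sup>+q. \<integral>\<^sup>+p. G q * glue_density (p, q) \<partial>\<pi>1 \<partial>\<pi>2)"
    by (subst \<pi>12.nn_integral_snd[symmetric]) simp_all
  also have "\<dots> = (\<integral>\<^sup>+q. G q \<partial>\<pi>2)"
    unfolding inner by (rule nn_integral_cong_AE) (use AE_cell_weight_\<pi>2 in eventually_elim, simp)
  finally show ?thesis .
qed

definition glued_pairs :: "(('a \<times> 'b) \<times> ('b \<times> 'c)) measure" where
  "glued_pairs = density (\<pi>1 \<Otimes>\<^sub>M \<pi>2) glue_density"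

lemma sets_glued_pairs[measurable_cong]: "sets glued_pairs = sets (\<pi>1 \<Otimes>\<^sub>M \<pi>2)"
  by (simp add: glued_pairs_def)

lemma nn_integral_glued_pairs_fst:
  assumes "F \<in> borel_measurable (borel \<Otimes>\<^sub>M borel)"
  shows "(\<integral>\<^sup>+z. F (fst z) \<partial>glued_pairs) = (\<integral>\<^sup>+p. F p \<partial>\<pi>1)"
  using assms nn_integral_glue_density_fst[OF assms]
  by (simp add: glued_pairs_def nn_integral_density mult.commute)

lemma nn_integral_glued_pairs_snd:
  assumes "G \<in> borel_measurable (borel \<Otimes>\<^sub>M borel)"
  shows "(\<integral>\<^sup>+z. G (snd z) \<partial>glued_pairs) = (\<integral>\<^sup>+q. G q \<partial>\<pi>2)"
  using assms nn_integral_glue_density_snd[OF assms]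
  by (simp add: glued_pairs_def nn_integral_density mult.commute)

lemma distr_glued_pairs_fst: "distr glued_pairs borel fst = \<pi>1"
proof (rule measure_eqI)
  show "sets (distr glued_pairs borel fst) = sets \<pi>1"
    by (simp add: sets_\<pi>1 sets_borel_pair)
  fix A assume A: "A \<in> sets (distr glued_pairs borel fst)"
  then have [measurable]: "A \<in> sets (borel \<Otimes>\<^sub>M borel)"
    by (simp add: sets_borel_pair)
  have "emeasure (distr glued_pairs borel fst) A = (\<integral>\<^sup>+p. indicator A p \<partial>distr glued_pairs borel fst)"
    using A by simp
  also have "\<dots> = (\<integral>\<^sup>+z. indicator A (fst z) \<partial>glued_pairs)"
    by (rule nn_integral_distr) simp_all
  also have "\<dots> = emeasure \<pi>1 A"
    by (simp add: nn_integral_glued_pairs_fst)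
  finally show "emeasure (distr glued_pairs borel fst) A = emeasure \<pi>1 A" .
qed

lemma distr_glued_pairs_snd: "distr glued_pairs borel snd = \<pi>2"
proof (rule measure_eqI)
  show "sets (distr glued_pairs borel snd) = sets \<pi>2"
    by (simp add: sets_\<pi>2 sets_borel_pair)
  fix A assume A: "A \<in> sets (distr glued_pairs borel snd)"
  then have [measurable]: "A \<in> sets (borel \<Otimes>\<^sub>M borel)"
    by (simp add: sets_borel_pair)
  have "emeasure (distr glued_pairs borel snd) A = (\<integral>\<^sup>+q. indicator A q \<partial>distr glued_pairs borel snd)"
    using A by simp
  also have "\<dots> = (\<integral>\<^sup>+z. indicator A (snd z) \<partial>glued_pairs)"
    by (rule nn_integral_distr) simp_all
  also have "\<dots> = emeasure \<pi>2 A"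
    by (simp add: nn_integral_glued_pairs_snd)
  finally show "emeasure (distr glued_pairs borel snd) A = emeasure \<pi>2 A" .
qed

lemma prob_space_glued_pairs: "prob_space glued_pairs"
  by (rule prob_space_distrD[of fst _ borel])
    (simp_all add: distr_glued_pairs_fst \<pi>1.prob_space_axioms)

lemma AE_glued_pairs_same_cell: "AE z in glued_pairs. k (snd (fst z)) = k (fst (snd z))"
  unfolding glued_pairs_def
  by (subst AE_density) (auto simp: glue_density_def)

definition glued :: "('a \<times> 'c) measure" where
  "glued = distr glued_pairs borel (\<lambda>z. (fst (fst z), snd (snd z)))"

lemma nn_integral_glued:
  assumes "g \<in> borel_measurable (borel \<Otimes>\<^sub>M borel)"
  shows "(\<integral>\<^sup>+x. g x \<partial>glued) = (\<integral>\<^sup>+z. g (fst (fst z), snd (snd z)) \<partial>glued_pairs)"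
  unfolding glued_def using assms by (subst nn_integral_distr) simp_all

lemma glued_coupling: "glued \<in> couplings \<mu> \<gamma>"
proof -
  have "distr glued borel fst = distr (distr glued_pairs borel fst) borel fst"
    unfolding glued_def by (simp add: distr_distr comp_def)
  also have "\<dots> = \<mu>"
    using couplingD(3)[OF coupling1] by (simp add: distr_glued_pairs_fst)
  finally have fst_marginal: "distr glued borel fst = \<mu>" .
  have "distr glued borel snd = distr (distr glued_pairs borel snd) borel snd"
    unfolding glued_def by (simp add: distr_distr comp_def)
  also have "\<dots> = \<gamma>"
    using couplingD(4)[OF coupling2] by (simp add: distr_glued_pairs_snd)
  finally have snd_marginal: "distr glued borel snd = \<gamma>" .
  have "prob_space glued"
    unfolding glued_def by (rule prob_space.prob_space_distr[OF prob_space_glued_pairs]) simp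
  with fst_marginal snd_marginal show ?thesis
    by (simp add: couplings_def glued_def)
qed

end

definition transport_cost :: "('a::metric_space \<times> 'a) measure \<Rightarrow> ennreal" where
  "transport_cost \<pi> = (\<integral>\<^sup>+p. ennreal (dist (fst p) (snd p)) \<partial>\<pi>)"

lemma W1_le_transport_cost: "\<pi> \<in> couplings \<mu> \<nu> \<Longrightarrow> W1 \<mu> \<nu> \<le> transport_cost \<pi>"
  unfolding W1_def transport_cost_def by (rule INF_lower)

lemma W1_less_iff: "W1 \<mu> \<nu> < c \<longleftrightarrow> (\<exists>\<pi>\<in>couplings \<mu> \<nu>. transport_cost \<pi> < c)"
  unfolding W1_def transport_cost_def by (rule INF_less_iff)

lemma gluing_transport_cost_le:
  fixes \<pi>1 \<pi>2 :: "('a::{metric_space,second_countable_topology} \<times> 'a) measure"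
  assumes \<pi>1: "\<pi>1 \<in> couplings \<mu> \<nu>" and \<pi>2: "\<pi>2 \<in> couplings \<nu> \<gamma>" and "\<eta> > 0"
  shows "\<exists>\<sigma>\<in>couplings \<mu> \<gamma>. transport_cost \<sigma> \<le> transport_cost \<pi>1 + transport_cost \<pi>2 + ennreal \<eta>"
proof -
  obtain k :: "'a \<Rightarrow> nat" where k: "k \<in> borel \<rightarrow>\<^sub>M count_space UNIV"
    and small: "\<And>a b. k a = k b \<Longrightarrow> dist a b \<le> \<eta>"
    using small_borel_partitionE[OF \<open>\<eta> > 0\<close>] by blast
  interpret gluing \<mu> \<nu> \<gamma> \<pi>1 \<pi>2 k
    using \<pi>1 \<pi>2 k by unfold_locales
  interpret glued_pairs: prob_space glued_pairs
    by (rule prob_space_glued_pairs)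
  define D where "D p = ennreal (dist (fst p) (snd p))" for p :: "'a \<times> 'a"
  have [measurable]: "D \<in> borel_measurable (borel \<Otimes>\<^sub>M borel)"
    unfolding D_def by measurable
  have "transport_cost glued = (\<integral>\<^sup>+z. D (fst (fst z), snd (snd z)) \<partial>glued_pairs)"
    unfolding transport_cost_def D_def[symmetric] by (rule nn_integral_glued) simp
  also have "\<dots> \<le> (\<integral>\<^sup>+z. D (fst z) + ennreal \<eta> + D (snd z) \<partial>glued_pairs)"
  proof (rule nn_integral_mono_AE)
    show "AE z in glued_pairs. D (fst (fst z), snd (snd z)) \<le> D (fst z) + ennreal \<eta> + D (snd z)"
      using AE_glued_pairs_same_cell
    proof eventually_elim
      case (elim z)
      obtain a b c d where z: "z = ((a, b), (c, d))" by (metis prod.collapse)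
      have "dist a d \<le> dist a b + dist b c + dist c d"
        using dist_triangle[of a d b] dist_triangle[of b d c] by linarith
      also have "\<dots> \<le> dist a b + \<eta> + dist c d"
        using small[of b c] elim z by simp
      finally show ?case
        using \<open>\<eta> > 0\<close> by (simp add: z D_def ennreal_plus[symmetric] del: ennreal_plus)
    qed
  qed
  also have "\<dots> = (\<integral>\<^sup>+z. D (fst z) \<partial>glued_pairs) + ennreal \<eta> + (\<integral>\<^sup>+z. D (snd z) \<partial>glued_pairs)"
    by (simp add: nn_integral_add glued_pairs.emeasure_space_1)
  also have "\<dots> = transport_cost \<pi>1 + ennreal \<eta> + transport_cost \<pi>2"
    unfolding transport_cost_def D_def[symmetric]
    by (simp add: nn_integral_glued_pairs_fst nn_integral_glued_pairs_snd)
  finally show ?thesis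
    using glued_coupling by (auto simp: ac_simps)
qed

lemma W1_le_transport_cost_add:
  fixes \<pi>1 \<pi>2 :: "('a::{metric_space,second_countable_topology} \<times> 'a) measure"
  assumes "\<pi>1 \<in> couplings \<mu> \<nu>" and "\<pi>2 \<in> couplings \<nu> \<gamma>"
  shows "W1 \<mu> \<gamma> \<le> transport_cost \<pi>1 + transport_cost \<pi>2"
proof (rule ennreal_le_epsilon)
  fix \<eta> :: real assume "0 < \<eta>"
  then obtain \<sigma> where "\<sigma> \<in> couplings \<mu> \<gamma>"
    and "transport_cost \<sigma> \<le> transport_cost \<pi>1 + transport_cost \<pi>2 + ennreal \<eta>"
    using gluing_transport_cost_le[OF assms] by blast
  then show "W1 \<mu> \<gamma> \<le> transport_cost \<pi>1 + transport_cost \<pi>2 + ennreal \<eta>"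
    using W1_le_transport_cost order_trans by blast
qed

lemma W1_triangle:
  fixes \<mu> \<nu> \<gamma> :: "'a::{metric_space,second_countable_topology} measure"
  shows "W1 \<mu> \<gamma> \<le> W1 \<mu> \<nu> + W1 \<nu> \<gamma>"
proof (rule ennreal_le_epsilon)
  fix e :: real assume finite: "W1 \<mu> \<nu> + W1 \<nu> \<gamma> < \<top>" and "0 < e"
  have less_add_half: "x < x + ennreal (e/2)" if "x < \<top>" for x :: ennreal
    using that \<open>0 < e\<close> by (cases x) (auto simp: ennreal_plus[symmetric] ennreal_less_iff simp del: ennreal_plus)
  obtain \<pi>1 where \<pi>1: "\<pi>1 \<in> couplings \<mu> \<nu>" and cost1: "transport_cost \<pi>1 < W1 \<mu> \<nu> + ennreal (e/2)"
    using less_add_half[of "W1 \<mu> \<nu>"] finite by (auto simp: W1_less_iff)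
  obtain \<pi>2 where \<pi>2: "\<pi>2 \<in> couplings \<nu> \<gamma>" and cost2: "transport_cost \<pi>2 < W1 \<nu> \<gamma> + ennreal (e/2)"
    using less_add_half[of "W1 \<nu> \<gamma>"] finite by (auto simp: W1_less_iff)
  have "W1 \<mu> \<gamma> \<le> transport_cost \<pi>1 + transport_cost \<pi>2"
    by (rule W1_le_transport_cost_add[OF \<pi>1 \<pi>2])
  also have "\<dots> \<le> W1 \<mu> \<nu> + ennreal (e/2) + (W1 \<nu> \<gamma> + ennreal (e/2))"
    using cost1 cost2 by (intro add_mono) auto
  also have "\<dots> = W1 \<mu> \<nu> + W1 \<nu> \<gamma> + ennreal e"
    using \<open>0 < e\<close> by (simp add: ac_simps ennreal_plus[symmetric] del: ennreal_plus)
  finally show "W1 \<mu> \<gamma> \<le> W1 \<mu> \<nu> + W1 \<nu> \<gamma> + ennreal e" .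
qed

lemma markov_kernel_Prob:
  assumes "markov_kernel P"
  shows "P x \<in> Prob"
proof -
  have "P x \<in> space (prob_algebra borel)"
    using assms unfolding markov_kernel_def by (rule measurable_space) simp
  then show ?thesis by (simp add: Prob_def space_prob_algebra)
qed

theorem mainTheorem19:
  fixes P :: "'x::polish_space \<Rightarrow> 'y::polish_space measure"
    and Q :: "'y \<Rightarrow> 'z::polish_space measure"
    and R :: "('x \<times> 'm) set"
    and L \<delta> \<epsilon> :: real
  assumes "markov_kernel P" "feller P" "tight_kernel P"
    and "markov_kernel Q" "feller Q" "tight_kernel Q"
    and "0 \<le> L"
    and "\<And>\<mu> \<nu>. \<mu> \<in> Prob \<Longrightarrow> \<nu> \<in> Prob \<Longrightarrow>
           W1 (Giry_Monad.bind \<mu> Q) (Giry_Monad.bind \<nu> Q) \<le> ennreal L * W1 \<mu> \<nu>"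
    and "0 \<le> \<delta>" "0 \<le> \<epsilon>"
  shows "meas_push_W Q \<epsilon> (kernel_push_W P \<delta> R) \<subseteq> kernel_push_W (comp_kernel Q P) (L * \<delta> + \<epsilon>) R"
proof (rule subsetI, clarify)
  fix \<gamma> m
  assume "(\<gamma>, m) \<in> meas_push_W Q \<epsilon> (kernel_push_W P \<delta> R)"
  then obtain \<nu> x where \<gamma>: "\<gamma> \<in> Prob" and \<nu>: "\<nu> \<in> Prob" and xm: "(x, m) \<in> R"
    and near_Px: "W1 (P x) \<nu> \<le> ennreal \<delta>" and near_\<nu>Q: "W1 (Giry_Monad.bind \<nu> Q) \<gamma> \<le> ennreal \<epsilon>"
    unfolding meas_push_W_def kernel_push_W_def by auto
  have "W1 (comp_kernel Q P x) \<gamma> \<le> W1 (Giry_Monad.bind (P x) Q) (Giry_Monad.bind \<nu> Q) + W1 (Giry_Monad.bind \<nu> Q) \<gamma>"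
    unfolding comp_kernel_def by (rule W1_triangle)
  also have "\<dots> \<le> ennreal L * ennreal \<delta> + ennreal \<epsilon>"
    using assms(8)[OF markov_kernel_Prob[OF assms(1)] \<nu>] near_Px near_\<nu>Q
    by (meson add_mono mult_left_mono order_trans zero_le)
  also have "\<dots> = ennreal (L * \<delta> + \<epsilon>)"
    using assms(7,9,10) by (simp add: ennreal_mult ennreal_plus)
  finally show "(\<gamma>, m) \<in> kernel_push_W (comp_kernel Q P) (L * \<delta> + \<epsilon>) R"
    unfolding kernel_push_W_def using \<gamma> xm by auto
qed

end
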